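(* Let $r\ge5$, let $T$ be a $K_r$-tree, let $G$ be a graph, and let $S=V(G)\cap V(T)$. Then, for any run of the $(r-2)_*$-BP process on $T$ with seed set $S$, every copy $\tilde H$ of $K_r$ that is completed by the $K_r$-dynamics started from $G\cup T$ satisfies $V(\tilde H)\subseteq V(G)\cup\langle S;T\rangle_*$.
   Context: A graph $T$ is a $K_r$-tree if it is the union of copies $H_1,\dots,H_\vartheta$ of $K_r$ such that for each $1<i\le\vartheta$, $H_i$ shares exactly one edge with $H_1\cup\cdots\cup H_{i-1}$ (the common vertices being exactly the two endpoints of that edge). An edge of $T$ is internal if it lies in at least two of the $H_i$. The $(r-2)_*$-bootstrap percolation process on $T$ with seed set $S\subseteq V(T)$: initially the vertices of $S$ are infected; in each step, either (usual step) some uninfected vertex with at least $r-2$ infected neighbors in $T$ becomes infected; or else (special step), if no usual step is possible but for some internal edge $f$ there are two copies $H_i\ne H_j$ containing $f$ such that $H_i$ has $r-4$ infected vertices and $H_j$ has $1$ infected vertex, all these $r-3$ vertices not in $f$, then an arbitrarily chosen vertex $u\in f$ becomes infected; otherwise the process terminates. $\langle S;T\rangle_*$ is the set of eventually infected vertices. The $K_r$-dynamics on a graph repeatedly adds an edge $e$ whenever there is a copy of $K_r$ in which $e$ is the only missing edge; such a copy is said to be completed by the dynamics (when $e$ is added). *)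

theory Defs
  imports Main
begin

(* A K_r-tree is given by the list Hs = [H_1,...,H_theta] of the vertex sets of the
   copies of K_r (a copy of K_r is determined by its vertex set). *)

definition Kr_tree :: "nat \<Rightarrow> 'a set list \<Rightarrow> bool" where
  "Kr_tree r Hs \<longleftrightarrow> Hs \<noteq> [] \<and>
     (\<forall>i < length Hs. finite (Hs ! i) \<and> card (Hs ! i) = r) \<and>
     (\<forall>i. 0 < i \<and> i < length Hs \<longrightarrow>
        (\<exists>u v. u \<noteq> v \<and> Hs ! i \<inter> (\<Union>j<i. Hs ! j) = {u, v} \<and>
               (\<exists>j<i. {u, v} \<subseteq> Hs ! j)))"

definition tree_verts :: "'a set list \<Rightarrow> 'a set" where
  "tree_verts Hs = \<Union> (set Hs)"

definition tree_edges :: "'a set list \<Rightarrow> 'a set set" where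
  "tree_edges Hs = {e. card e = 2 \<and> (\<exists>H \<in> set Hs. e \<subseteq> H)}"

definition tree_adj :: "'a set list \<Rightarrow> 'a \<Rightarrow> 'a \<Rightarrow> bool" where
  "tree_adj Hs v w \<longleftrightarrow> v \<noteq> w \<and> {v, w} \<in> tree_edges Hs"

definition internal_edge :: "'a set list \<Rightarrow> 'a set \<Rightarrow> bool" where
  "internal_edge Hs f \<longleftrightarrow> card f = 2 \<and>
     (\<exists>i j. i < length Hs \<and> j < length Hs \<and> i \<noteq> j \<and> f \<subseteq> Hs ! i \<and> f \<subseteq> Hs ! j)"

definition bp_usual_step :: "nat \<Rightarrow> 'a set list \<Rightarrow> 'a set \<Rightarrow> 'a \<Rightarrow> bool" where
  "bp_usual_step r Hs I v \<longleftrightarrow> v \<in> tree_verts Hs \<and> v \<notin> I \<and>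
     card {w \<in> I. tree_adj Hs v w} \<ge> r - 2"

definition bp_special_step :: "nat \<Rightarrow> 'a set list \<Rightarrow> 'a set \<Rightarrow> 'a \<Rightarrow> bool" where
  "bp_special_step r Hs I u \<longleftrightarrow> (\<nexists>v. bp_usual_step r Hs I v) \<and>
     (\<exists>f i j. internal_edge Hs f \<and> i < length Hs \<and> j < length Hs \<and> i \<noteq> j \<and>
        f \<subseteq> Hs ! i \<and> f \<subseteq> Hs ! j \<and>
        card (Hs ! i \<inter> I) = r - 4 \<and> card (Hs ! j \<inter> I) = 1 \<and>
        ((Hs ! i \<inter> I) \<union> (Hs ! j \<inter> I)) \<inter> f = {} \<and> u \<in> f)"

definition bp_step :: "nat \<Rightarrow> 'a set list \<Rightarrow> 'a set \<Rightarrow> 'a \<Rightarrow> bool" where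
  "bp_step r Hs I v \<longleftrightarrow> bp_usual_step r Hs I v \<or> bp_special_step r Hs I v"

(* a complete (terminated) run of the (r-2)_*-BP process on T with seed set S:
   the list vs of vertices infected in order; final infected set S \<union> set vs *)
definition bp_run :: "nat \<Rightarrow> 'a set list \<Rightarrow> 'a set \<Rightarrow> 'a list \<Rightarrow> bool" where
  "bp_run r Hs S vs \<longleftrightarrow>
     (\<forall>k < length vs. bp_step r Hs (S \<union> set (take k vs)) (vs ! k)) \<and>
     (\<nexists>v. bp_step r Hs (S \<union> set vs) v)"

(* K_r-dynamics on a graph with vertex set V and edge set E0: es is the list of added edges *)
definition dyn_run :: "nat \<Rightarrow> 'a set \<Rightarrow> 'a set set \<Rightarrow> 'a set list \<Rightarrow> bool" where
  "dyn_run r V E0 es \<longleftrightarrow>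
     (\<forall>k < length es.
        card (es ! k) = 2 \<and> es ! k \<notin> E0 \<union> set (take k es) \<and>
        (\<exists>K \<subseteq> V. card K = r \<and> es ! k \<subseteq> K \<and>
           (\<forall>p \<subseteq> K. card p = 2 \<and> p \<noteq> es ! k \<longrightarrow> p \<in> E0 \<union> set (take k es))))"

definition dyn_completed :: "nat \<Rightarrow> 'a set \<Rightarrow> 'a set set \<Rightarrow> 'a set list \<Rightarrow> 'a set \<Rightarrow> bool" where
  "dyn_completed r V E0 es K \<longleftrightarrow> K \<subseteq> V \<and> card K = r \<and>
     (\<exists>k < length es. es ! k \<subseteq> K \<and>
        (\<forall>p \<subseteq> K. card p = 2 \<and> p \<noteq> es ! k \<longrightarrow> p \<in> E0 \<union> set (take k es)))"

definition simple_graph :: "'a set \<Rightarrow> 'a set set \<Rightarrow> bool" where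
  "simple_graph V E \<longleftrightarrow> finite V \<and> (\<forall>e \<in> E. card e = 2 \<and> e \<subseteq> V)"

end

theory Submission
  imports Defs
begin

(* Let A be the final infected set; since the process has terminated, no usual or special step
   applies to A. By induction along the K_r-dynamics, every added edge lies inside
   W = V(G) \<union> A. Take a copy K completed by adding the edge ab and suppose U = K - W is
   nonempty. Every pair of K that meets U, other than ab, must be an edge of T. The copies of a
   K_r-tree have the running intersection property, so every clique of T lies in one copy and
   two copies meet in at most an edge. Counting infected neighbours shows that U - {a, b} is
   nonempty and |U| \<ge> 3, and three vertices in U - {a, b} would put a and b into a common
   copy. In the two remaining cases |U - {a, b}| = 1 or 2, either a and b again lie in a common
   copy, contradicting that ab is not an edge of T, or a special step is possible. *)

inductive running_intersection :: "'a set list \<Rightarrow> bool" where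
  Nil: "running_intersection []"
| single: "running_intersection [H]"
| snoc: "running_intersection Hs \<Longrightarrow> H' \<in> set Hs \<Longrightarrow> H \<inter> \<Union>(set Hs) \<subseteq> H' \<Longrightarrow>
    running_intersection (Hs @ [H])"

lemma running_intersection_clique:
  assumes "running_intersection Hs" and "C \<noteq> {}" and "C \<subseteq> \<Union>(set Hs)"
    and "\<And>p q. p \<in> C \<Longrightarrow> q \<in> C \<Longrightarrow> p \<noteq> q \<Longrightarrow> \<exists>H\<in>set Hs. p \<in> H \<and> q \<in> H"
  shows "\<exists>H\<in>set Hs. C \<subseteq> H"
  using assms
proof (induction arbitrary: C rule: running_intersection.induct)
  case Nil
  then show ?case by simp
next
  case (single H)
  then show ?case by simp
next
  case (snoc Hs H' H)
  show ?case
  proof (cases "C \<subseteq> \<Union>(set Hs)")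
    case True
    have "\<exists>G\<in>set Hs. p \<in> G \<and> q \<in> G" if pq: "p \<in> C" "q \<in> C" "p \<noteq> q" for p q
    proof -
      obtain G where G: "G \<in> set (Hs @ [H])" "p \<in> G" "q \<in> G"
        using snoc.prems(3)[OF pq] by blast
      show ?thesis
      proof (cases "G = H")
        case True
        then have "p \<in> H'" "q \<in> H'" using G \<open>C \<subseteq> \<Union>(set Hs)\<close> pq(1,2) snoc.hyps(3) by blast+
        then show ?thesis using snoc.hyps(2) by blast
      next
        case False
        then show ?thesis using G by auto
      qed
    qed
    then show ?thesis using snoc.IH[OF snoc.prems(1) True] by auto
  next
    case False
    then obtain p where p: "p \<in> C" "p \<notin> \<Union>(set Hs)" by blast
    have "C \<subseteq> H"
    proof
      fix q assume "q \<in> C"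
      then show "q \<in> H"
        using p snoc.prems(2) snoc.prems(3)[of p q] by (cases "q = p") auto
    qed
    then show ?thesis by simp
  qed
qed

lemma running_intersection_4cycle_chord:
  assumes "running_intersection Hs"
    and "\<exists>H\<in>set Hs. a \<in> H \<and> x \<in> H" "\<exists>H\<in>set Hs. x \<in> H \<and> b \<in> H"
    and "\<exists>H\<in>set Hs. b \<in> H \<and> y \<in> H" "\<exists>H\<in>set Hs. y \<in> H \<and> a \<in> H"
  shows "(\<exists>H\<in>set Hs. a \<in> H \<and> b \<in> H) \<or> (\<exists>H\<in>set Hs. x \<in> H \<and> y \<in> H)"
  using assms
proof (induction rule: running_intersection.induct)
  case Nil
  then show ?case by simp
next
  case (single H)
  then show ?case by simp
next
  case (snoc Hs H' H)
  let ?V = "\<Union>(set Hs)"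
  show ?case
  proof (cases "{a, b, x, y} \<subseteq> ?V")
    case True
    have lift: "\<exists>G\<in>set Hs. p \<in> G \<and> q \<in> G"
      if "\<exists>G\<in>set (Hs @ [H]). p \<in> G \<and> q \<in> G" "p \<in> ?V" "q \<in> ?V" for p q
      using that snoc.hyps(2,3) by auto
    from True have V: "a \<in> ?V" "b \<in> ?V" "x \<in> ?V" "y \<in> ?V" by auto
    have "(\<exists>G\<in>set Hs. a \<in> G \<and> b \<in> G) \<or> (\<exists>G\<in>set Hs. x \<in> G \<and> y \<in> G)"
      by (rule snoc.IH[OF lift[OF snoc.prems(1) V(1,3)] lift[OF snoc.prems(2) V(3,2)]
            lift[OF snoc.prems(3) V(2,4)] lift[OF snoc.prems(4) V(4,1)]])
    then show ?thesis by auto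
  next
    case False
    \<comment> \<open>a vertex outside the earlier copies lies only in \<open>H\<close>, and so do its cycle neighbours\<close>
    have new: "p \<in> H \<and> q \<in> H" if "\<exists>G\<in>set (Hs @ [H]). p \<in> G \<and> q \<in> G" "p \<notin> ?V" for p q
      using that by auto
    have H: "H \<in> set (Hs @ [H])" by simp
    from False consider "a \<notin> ?V" | "b \<notin> ?V" | "x \<notin> ?V" | "y \<notin> ?V" by blast
    then show ?thesis
    proof cases
      case 1
      then show ?thesis using new[of a x] new[of a y] snoc.prems(1,4) H by blast
    next
      case 2
      then show ?thesis using new[of b x] new[of b y] snoc.prems(2,3) H by blast
    next
      case 3
      then show ?thesis using new[of x a] new[of x b] snoc.prems(1,2) H by blast
    next
      case 4
      then show ?thesis using new[of y b] new[of y a] snoc.prems(3,4) H by blast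
    qed
  qed
qed

lemma Union_set_take: "n \<le> length xs \<Longrightarrow> \<Union>(set (take n xs)) = (\<Union>k<n. xs ! k)"
  by (simp add: nth_image[symmetric] atLeast0LessThan)

lemma Kr_tree_running_intersection:
  assumes "Kr_tree r Hs"
  shows "running_intersection Hs"
proof -
  have "running_intersection (take n Hs)" if "n \<le> length Hs" for n
    using that
  proof (induction n)
    case 0
    then show ?case by (simp add: running_intersection.Nil)
  next
    case (Suc n)
    have take_Suc: "take (Suc n) Hs = take n Hs @ [Hs ! n]"
      using Suc.prems by (simp add: take_Suc_conv_app_nth)
    show ?case
    proof (cases "n = 0")
      case True
      then show ?thesis using take_Suc by (simp add: running_intersection.single)
    next
      case False
      have "0 < n" "n < length Hs" using False Suc.prems by simp_all
      then obtain u v j where "Hs ! n \<inter> (\<Union>k<n. Hs ! k) = {u, v}" "j < n" "{u, v} \<subseteq> Hs ! j"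
        using assms unfolding Kr_tree_def by blast
      moreover have "Hs ! j \<in> set (take n Hs)"
        using \<open>j < n\<close> Suc.prems by (auto simp: in_set_conv_nth)
      ultimately show ?thesis
        using running_intersection.snoc[OF Suc.IH] Suc.prems take_Suc by (simp add: Union_set_take)
    qed
  qed
  then show ?thesis by (metis order.refl take_all)
qed

lemma Kr_tree_copy_eqI:
  assumes "Kr_tree r Hs" and "H \<in> set Hs" "H' \<in> set Hs"
    and "T \<subseteq> H" "T \<subseteq> H'" "2 < card T"
  shows "H = H'"
proof -
  have no_later_copy: "\<not> (T \<subseteq> Hs ! i \<and> T \<subseteq> Hs ! j)" if ji: "j < i" "i < length Hs" for i j
  proof
    assume T: "T \<subseteq> Hs ! i \<and> T \<subseteq> Hs ! j"
    have "0 < i" using ji by simp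
    then obtain u v where "Hs ! i \<inter> (\<Union>k<i. Hs ! k) = {u, v}"
      using assms(1) ji(2) unfolding Kr_tree_def by blast
    moreover have "T \<subseteq> Hs ! i \<inter> (\<Union>k<i. Hs ! k)"
      using ji T by blast
    ultimately have "card T \<le> card {u, v}"
      by (simp add: card_mono)
    also have "\<dots> \<le> 2"
      by (simp add: card_insert_if)
    finally show False using assms(6) by simp
  qed
  obtain i j where "i < length Hs" "H = Hs ! i" "j < length Hs" "H' = Hs ! j"
    using assms(2,3) by (metis in_set_conv_nth)
  with no_later_copy[of i j] no_later_copy[of j i] assms(4,5) show ?thesis
    by (cases i j rule: linorder_cases) auto
qed

lemma Kr_tree_copies_meet_in_edge:
  assumes "Kr_tree r Hs" and "H \<in> set Hs" "H' \<in> set Hs" "H \<noteq> H'"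
    and "c1 \<noteq> c2" "{c1, c2} \<subseteq> H \<inter> H'"
  shows "H \<inter> H' = {c1, c2}"
proof (rule ccontr)
  assume "H \<inter> H' \<noteq> {c1, c2}"
  then obtain w where w: "w \<in> H \<inter> H'" "w \<notin> {c1, c2}"
    using assms(6) by blast
  have "H = H'"
    by (rule Kr_tree_copy_eqI[OF assms(1-3), of "{c1, c2, w}"])
      (use assms(5,6) w in \<open>auto simp: card_insert_if\<close>)
  then show False
    using assms(4) by blast
qed

lemma Kr_tree_finite_verts: "Kr_tree r Hs \<Longrightarrow> finite (tree_verts Hs)"
  unfolding Kr_tree_def tree_verts_def by (metis finite_Union finite_set in_set_conv_nth)

lemma tree_adj_iff: "tree_adj Hs v w \<longleftrightarrow> v \<noteq> w \<and> (\<exists>H\<in>set Hs. v \<in> H \<and> w \<in> H)"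
  unfolding tree_adj_def tree_edges_def by auto

lemma tree_adj_sym: "tree_adj Hs v w \<Longrightarrow> tree_adj Hs w v"
  unfolding tree_adj_iff by blast

lemma tree_adj_verts: "tree_adj Hs v w \<Longrightarrow> v \<in> tree_verts Hs \<and> w \<in> tree_verts Hs"
  unfolding tree_adj_iff tree_verts_def by blast

definition tree_clique :: "'a set list \<Rightarrow> 'a set \<Rightarrow> bool" where
  "tree_clique Hs C \<longleftrightarrow> C \<subseteq> tree_verts Hs \<and> (\<forall>p\<in>C. \<forall>q\<in>C. p \<noteq> q \<longrightarrow> tree_adj Hs p q)"

lemma tree_clique_singleton: "x \<in> tree_verts Hs \<Longrightarrow> tree_clique Hs {x}"
  unfolding tree_clique_def by simp

lemma tree_clique_pair: "tree_adj Hs x y \<Longrightarrow> tree_clique Hs {x, y}"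
  unfolding tree_clique_def by (auto dest: tree_adj_verts tree_adj_sym)

lemma tree_clique_insert:
  "tree_clique Hs C \<Longrightarrow> a \<in> tree_verts Hs \<Longrightarrow> (\<And>x. x \<in> C \<Longrightarrow> x \<noteq> a \<Longrightarrow> tree_adj Hs a x) \<Longrightarrow>
    tree_clique Hs (insert a C)"
  unfolding tree_clique_def by (metis insert_iff insert_subset tree_adj_sym)

lemma Kr_tree_clique_in_copy:
  assumes "Kr_tree r Hs" and "tree_clique Hs C" and "C \<noteq> {}"
  shows "\<exists>H\<in>set Hs. C \<subseteq> H"
proof (rule running_intersection_clique[OF Kr_tree_running_intersection[OF assms(1)] assms(3)])
  show "C \<subseteq> \<Union>(set Hs)" using assms(2) unfolding tree_clique_def tree_verts_def by simp
  show "\<exists>H\<in>set Hs. p \<in> H \<and> q \<in> H" if "p \<in> C" "q \<in> C" "p \<noteq> q" for p q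
    using assms(2) that unfolding tree_clique_def tree_adj_iff by blast
qed

lemma Kr_tree_common_triangle:
  assumes "Kr_tree r Hs" and "tree_clique Hs C" and "3 \<le> card C"
    and "\<And>x. x \<in> C \<Longrightarrow> tree_adj Hs a x \<and> tree_adj Hs b x"
  shows "\<exists>H\<in>set Hs. a \<in> H \<and> b \<in> H"
proof -
  obtain x where x: "x \<in> C"
    using assms(3) by (metis all_not_in_conv card.empty not_numeral_le_zero)
  have copy_with: "\<exists>H\<in>set Hs. insert c C \<subseteq> H" if adj: "\<And>x. x \<in> C \<Longrightarrow> tree_adj Hs c x" for c
  proof (rule Kr_tree_clique_in_copy[OF assms(1) tree_clique_insert[OF assms(2)]])
    show "c \<in> tree_verts Hs" using tree_adj_verts[OF adj[OF x]] by blast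
    show "tree_adj Hs c y" if "y \<in> C" for y using adj that by blast
  qed simp
  obtain H where H: "H \<in> set Hs" "insert a C \<subseteq> H"
    using copy_with[of a] assms(4) by blast
  obtain H' where H': "H' \<in> set Hs" "insert b C \<subseteq> H'"
    using copy_with[of b] assms(4) by blast
  have "H = H'"
    using Kr_tree_copy_eqI[OF assms(1) H(1) H'(1), of C] H(2) H'(2) assms(3) by simp
  then show ?thesis using H H' by auto
qed

definition infected_nbrs :: "'a set list \<Rightarrow> 'a set \<Rightarrow> 'a \<Rightarrow> 'a set" where
  "infected_nbrs Hs I v = {w \<in> I. tree_adj Hs v w}"

lemma finite_infected_nbrs: "Kr_tree r Hs \<Longrightarrow> finite (infected_nbrs Hs I v)"
  unfolding infected_nbrs_def
  by (rule finite_subset[OF _ Kr_tree_finite_verts]) (auto dest: tree_adj_verts)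

lemma card_infected_nbrs_less:
  "\<not> bp_usual_step r Hs I v \<Longrightarrow> v \<in> tree_verts Hs \<Longrightarrow> v \<notin> I \<Longrightarrow> card (infected_nbrs Hs I v) < r - 2"
  unfolding bp_usual_step_def infected_nbrs_def by simp

lemma bp_special_stepI:
  assumes "\<nexists>v. bp_usual_step r Hs I v"
    and "H1 \<in> set Hs" "H2 \<in> set Hs" "H1 \<noteq> H2"
    and "c1 \<noteq> c2" "{c1, c2} \<subseteq> H1" "{c1, c2} \<subseteq> H2" "c1 \<notin> I" "c2 \<notin> I"
    and "card (H1 \<inter> I) = r - 4" "card (H2 \<inter> I) = 1"
  shows "bp_special_step r Hs I c1"
proof -
  obtain i j where ij: "i < length Hs" "H1 = Hs ! i" "j < length Hs" "H2 = Hs ! j" "i \<noteq> j"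
    using assms(2-4) by (metis in_set_conv_nth)
  then have "internal_edge Hs {c1, c2}"
    unfolding internal_edge_def using assms(5-7) by auto
  with ij show ?thesis
    unfolding bp_special_step_def
    using assms(1,6-) by (intro conjI exI[of _ "{c1, c2}"] exI[of _ i] exI[of _ j]) auto
qed

(* K is a copy completed by adding the edge ab, and U stands for K - (V(G) \<union> A); the goal
   is U = {}. *)
locale completed_copy =
  fixes r :: nat and Hs :: "'a set list" and A :: "'a set"
    and K :: "'a set" and a b :: 'a and U :: "'a set"
  assumes r_ge_5: "5 \<le> r"
    and tree: "Kr_tree r Hs"
    and closed: "\<And>v. \<not> bp_step r Hs A v"
    and card_K: "card K = r"
    and a_in_K: "a \<in> K" and b_in_K: "b \<in> K" and a_ne_b: "a \<noteq> b"
    and ab_not_tree: "\<not> (\<exists>H\<in>set Hs. a \<in> H \<and> b \<in> H)"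
    and U_sub_K: "U \<subseteq> K"
    and U_tree: "U \<subseteq> tree_verts Hs"
    and U_uninfected: "U \<inter> A = {}"
    and outside_U_infected: "\<And>x. x \<in> K - U \<Longrightarrow> x \<in> tree_verts Hs \<Longrightarrow> x \<in> A"
    and U_adj: "\<And>u x. u \<in> U \<Longrightarrow> x \<in> K \<Longrightarrow> x \<noteq> u \<Longrightarrow> {u, x} \<noteq> {a, b} \<Longrightarrow> tree_adj Hs u x"
begin

lemma swap: "completed_copy r Hs A K b a U"
  by unfold_locales
    (use r_ge_5 tree closed card_K a_in_K b_in_K a_ne_b ab_not_tree U_sub_K U_tree U_uninfected
      outside_U_infected U_adj in \<open>auto simp: insert_commute\<close>)

lemma finite_K: "finite K"
  using card_K r_ge_5 card.infinite by fastforce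

lemma no_usual_step: "\<not> bp_usual_step r Hs A v"
  using closed unfolding bp_step_def by blast

lemma card_infected_nbrs_U: "u \<in> U \<Longrightarrow> card (infected_nbrs Hs A u) < r - 2"
  using card_infected_nbrs_less[OF no_usual_step] U_tree U_uninfected by blast

lemma off_e_adj: "q \<in> U - {a, b} \<Longrightarrow> x \<in> K \<Longrightarrow> x \<noteq> q \<Longrightarrow> tree_adj Hs q x"
  using U_adj by (auto simp: doubleton_eq_iff)

lemma off_e_nonempty:
  assumes "U \<noteq> {}"
  shows "U - {a, b} \<noteq> {}"
proof
  assume off_e: "U - {a, b} = {}"
  obtain v where v: "v \<in> U" "v \<in> {a, b}"
    using assms off_e by blast
  have "K - {a, b} \<subseteq> infected_nbrs Hs A v"
  proof
    fix x assume x: "x \<in> K - {a, b}"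
    then have adj: "tree_adj Hs v x"
      using U_adj[OF v(1)] v(2) by (auto simp: doubleton_eq_iff)
    moreover have "x \<in> A"
      using outside_U_infected[of x] tree_adj_verts[OF adj] x off_e by blast
    ultimately show "x \<in> infected_nbrs Hs A v"
      unfolding infected_nbrs_def by blast
  qed
  then have "card (K - {a, b}) \<le> card (infected_nbrs Hs A v)"
    by (rule card_mono[OF finite_infected_nbrs[OF tree]])
  moreover have "card (K - {a, b}) = r - 2"
    using card_K a_in_K b_in_K a_ne_b finite_K by (simp add: card_Diff_subset)
  ultimately show False
    using card_infected_nbrs_U[OF v(1)] by linarith
qed

lemma K_tree:
  assumes "c \<in> U - {a, b}"
  shows "K \<subseteq> tree_verts Hs"
proof
  fix x assume "x \<in> K"
  show "x \<in> tree_verts Hs"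
  proof (cases "x = c")
    case True
    then show ?thesis using assms U_tree by blast
  next
    case False
    then show ?thesis using tree_adj_verts[OF off_e_adj[OF assms \<open>x \<in> K\<close>]] by blast
  qed
qed

lemma outside_U_nbrs:
  assumes "c \<in> U - {a, b}"
  shows "K - U \<subseteq> infected_nbrs Hs A c"
  using outside_U_infected K_tree[OF assms] off_e_adj[OF assms] assms
  unfolding infected_nbrs_def by blast

lemma card_outside_U:
  assumes "c \<in> U - {a, b}"
  shows "card (K - U) < r - 2"
  using card_mono[OF finite_infected_nbrs[OF tree] outside_U_nbrs[OF assms]]
    card_infected_nbrs_U assms by fastforce

lemma card_K_split: "card K = card U + card (K - U)"
  using card_Diff_subset[OF finite_subset[OF U_sub_K finite_K] U_sub_K]
    card_mono[OF finite_K U_sub_K] by linarith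

lemma card_U:
  assumes "U \<noteq> {}"
  shows "3 \<le> card U"
proof -
  obtain c where "c \<in> U - {a, b}" using off_e_nonempty[OF assms] by blast
  then show ?thesis using card_outside_U card_K_split card_K r_ge_5 by fastforce
qed

lemma tree_clique_insert_off_e:
  "tree_clique Hs C \<Longrightarrow> C \<subseteq> K \<Longrightarrow> q \<in> U - {a, b} \<Longrightarrow> tree_clique Hs (insert q C)"
  by (rule tree_clique_insert) (use U_tree off_e_adj in auto)

lemma tree_clique_insert_off_e_pair:
  assumes "tree_clique Hs C" "C \<subseteq> K" "c1 \<in> U - {a, b}" "c2 \<in> U - {a, b}"
  shows "tree_clique Hs (insert c1 (insert c2 C))"
proof -
  have "tree_clique Hs (insert c2 C)"
    using tree_clique_insert_off_e assms by blast
  then show ?thesis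
    using tree_clique_insert_off_e assms U_sub_K by blast
qed

lemma no_common_triangle:
  "tree_clique Hs C \<Longrightarrow> 3 \<le> card C \<Longrightarrow> (\<And>x. x \<in> C \<Longrightarrow> tree_adj Hs a x \<and> tree_adj Hs b x) \<Longrightarrow> False"
  using Kr_tree_common_triangle[OF tree] ab_not_tree by blast

lemma copy_with_off_e_pair:
  assumes "tree_clique Hs C" "C \<subseteq> K" "C \<noteq> {}" "c1 \<in> U - {a, b}" "c2 \<in> U - {a, b}"
  shows "\<exists>H\<in>set Hs. insert c1 (insert c2 C) \<subseteq> H"
  using Kr_tree_clique_in_copy[OF tree tree_clique_insert_off_e_pair] assms by blast

lemma card_off_e_le_2: "card (U - {a, b}) \<le> 2"
proof (rule ccontr)
  assume "\<not> card (U - {a, b}) \<le> 2"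
  then have "3 \<le> card (U - {a, b})" by simp
  then obtain C where C: "C \<subseteq> U - {a, b}" "card C = 3"
    using obtain_subset_with_card_n by metis
  have "tree_clique Hs C"
    unfolding tree_clique_def using C(1) U_tree off_e_adj U_sub_K by blast
  moreover have "tree_adj Hs a x \<and> tree_adj Hs b x" if "x \<in> C" for x
  proof -
    have x: "x \<in> U - {a, b}" using C(1) that by blast
    show ?thesis
      using tree_adj_sym[OF off_e_adj[OF x a_in_K]] tree_adj_sym[OF off_e_adj[OF x b_in_K]] x by blast
  qed
  ultimately show False
    using no_common_triangle C(2) by (metis order.refl)
qed

lemma ends_uninfected_no_triangle:
  assumes "a \<in> U" "b \<in> U" and "tree_clique Hs C" "C \<subseteq> K - {a, b}" "3 \<le> card C"
  shows False
proof (rule no_common_triangle[OF assms(3,5)])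
  fix x assume "x \<in> C"
  then show "tree_adj Hs a x \<and> tree_adj Hs b x"
    using U_adj[OF assms(1)] U_adj[OF assms(2)] assms(4) a_ne_b by (auto simp: doubleton_eq_iff)
qed

lemma card_off_e_ne_1: "card (U - {a, b}) \<noteq> 1"
proof
  assume "card (U - {a, b}) = 1"
  then obtain c where c: "U - {a, b} = {c}"
    by (auto simp: card_1_singleton_iff)
  then have c_off_e: "c \<in> U - {a, b}"
    by blast
  have card_U: "3 \<le> card U"
    using card_U c_off_e by blast
  have U_sub: "U \<subseteq> {a, b, c}"
    using c by blast
  have card_abc: "card {a, b, c} = 3"
    using c_off_e a_ne_b by (auto simp: card_insert_if)
  have U: "U = {a, b, c}"
    using card_seteq[OF _ U_sub] card_U card_abc by simp
  then have "card U = 3"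
    using card_abc by simp
  then have "2 \<le> card (K - U)"
    using card_K_split card_K r_ge_5 by linarith
  then obtain D where "D \<subseteq> K - U" "card D = 2"
    using obtain_subset_with_card_n by metis
  then obtain x y where xy: "x \<in> K - U" "y \<in> K - U" "x \<noteq> y"
    by (auto simp: card_2_iff)
  have adj: "tree_adj Hs v w" if "v \<in> {a, b}" "w \<in> {x, y}" for v w
    using U_adj[of v w] that xy U a_ne_b by (auto simp: doubleton_eq_iff)
  then have "tree_adj Hs a x" "tree_adj Hs x b" "tree_adj Hs b y" "tree_adj Hs y a"
    using tree_adj_sym[of Hs b x] tree_adj_sym[of Hs a y] by simp_all
  then have "(\<exists>H\<in>set Hs. a \<in> H \<and> b \<in> H) \<or> (\<exists>H\<in>set Hs. x \<in> H \<and> y \<in> H)"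
    unfolding tree_adj_iff
    by (intro running_intersection_4cycle_chord[OF Kr_tree_running_intersection[OF tree]]) simp_all
  then have "tree_adj Hs x y"
    using ab_not_tree xy(3) unfolding tree_adj_iff by blast
  then have clique: "tree_clique Hs (insert c {x, y})"
    using tree_clique_insert_off_e[OF tree_clique_pair _ c_off_e] xy by blast
  have card_3: "card (insert c {x, y}) = 3"
    using xy U by auto
  have off_e: "insert c {x, y} \<subseteq> K - {a, b}"
    using xy c_off_e U_sub_K U by auto
  have "a \<in> U" "b \<in> U"
    using U by simp_all
  from ends_uninfected_no_triangle[OF this clique off_e] card_3 show False
    by simp
qed

lemma infected_nbrs_off_e:
  assumes "card (K - U) = r - 3" "c \<in> U - {a, b}"
  shows "infected_nbrs Hs A c = K - U"
proof -
  have sub: "K - U \<subseteq> infected_nbrs Hs A c"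
    by (rule outside_U_nbrs[OF assms(2)])
  have "card (infected_nbrs Hs A c) < r - 2"
    using card_infected_nbrs_U assms(2) by blast
  then have "card (K - U) = card (infected_nbrs Hs A c)"
    using card_mono[OF finite_infected_nbrs[OF tree] sub] assms(1) by linarith
  then show ?thesis
    using card_subset_eq[OF finite_infected_nbrs[OF tree] sub] by simp
qed

lemma infected_in_copy_off_e:
  assumes "card (K - U) = r - 3" "c \<in> U - {a, b}" "H \<in> set Hs" "c \<in> H"
  shows "H \<inter> A \<subseteq> K - U"
proof
  fix w assume w: "w \<in> H \<inter> A"
  then have "w \<noteq> c"
    using assms(2) U_uninfected by blast
  then have "tree_adj Hs c w"
    using assms(3,4) w unfolding tree_adj_iff by blast
  then show "w \<in> K - U"
    using w infected_nbrs_off_e[OF assms(1,2)] unfolding infected_nbrs_def by blast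
qed

lemma copy_through_off_e_pair:
  assumes c: "c1 \<in> U - {a, b}" "c2 \<in> U - {a, b}" "c1 \<noteq> c2" and a_U: "a \<in> U"
  obtains H where "H \<in> set Hs" "{a, c1, c2} \<subseteq> H" "K - U - {b} \<subseteq> H"
proof -
  have a_tree: "a \<in> tree_verts Hs"
    using K_tree[OF c(1)] a_in_K by blast
  obtain H where H: "H \<in> set Hs" "insert c1 (insert c2 {a}) \<subseteq> H"
    using copy_with_off_e_pair[OF tree_clique_singleton[OF a_tree] _ _ c(1,2)] a_in_K by blast
  have card_3: "card {a, c1, c2} = 3"
    using c by (auto simp: card_insert_if)
  have "x \<in> H" if x: "x \<in> K - U - {b}" for x
  proof -
    have "tree_adj Hs a x"
      using U_adj[OF a_U, of x] x a_U by (auto simp: doubleton_eq_iff)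
    then obtain Hx where "Hx \<in> set Hs" "insert c1 (insert c2 {a, x}) \<subseteq> Hx"
      using copy_with_off_e_pair[OF tree_clique_pair _ _ c(1,2)] x a_in_K by blast
    moreover from this have "Hx = H"
      using Kr_tree_copy_eqI[OF tree _ H(1), of Hx "{a, c1, c2}"] H(2) card_3 by auto
    ultimately show "x \<in> H" by blast
  qed
  then show thesis
    using that H by auto
qed

(* Otherwise U = {a, c1, c2}, and the two copies through c1c2 containing a and b, respectively,
   allow a special step at c1. *)
lemma other_end_uninfected:
  assumes Q: "U - {a, b} = {c1, c2}" "c1 \<noteq> c2" and a_U: "a \<in> U"
  shows "b \<in> U"
proof (rule ccontr)
  assume b_U: "b \<notin> U"
  have c: "c1 \<in> U - {a, b}" "c2 \<in> U - {a, b}"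
    using Q(1) by blast+
  have "U = {a, c1, c2}"
    using Q(1) a_U b_U by blast
  then have "card U = 3"
    using c Q(2) by (auto simp: card_insert_if)
  then have card_P: "card (K - U) = r - 3"
    using card_K_split card_K by linarith
  have b_P: "b \<in> K - U"
    using b_in_K b_U by blast
  have b_A: "b \<in> A"
    using outside_U_infected[OF b_P] K_tree[OF c(1)] b_in_K by blast
  have P_A: "K - U \<subseteq> A"
    using outside_U_infected K_tree[OF c(1)] by blast
  obtain H1 where H1: "H1 \<in> set Hs" "{a, c1, c2} \<subseteq> H1" "K - U - {b} \<subseteq> H1"
    using copy_through_off_e_pair[OF c Q(2) a_U] .
  obtain H2 where H2: "H2 \<in> set Hs" "insert c1 (insert c2 {b}) \<subseteq> H2"
    using copy_with_off_e_pair[OF tree_clique_singleton _ _ c] K_tree[OF c(1)] b_in_K by blast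
  have b_H1: "b \<notin> H1"
    using ab_not_tree H1 by blast
  have H1_A: "H1 \<inter> A = K - U - {b}"
    using infected_in_copy_off_e[OF card_P c(1) H1(1)] H1(2,3) b_H1 P_A by blast
  have H12: "H1 \<noteq> H2"
    using b_H1 H2(2) by blast
  have H1_H2: "H1 \<inter> H2 = {c1, c2}"
    using Kr_tree_copies_meet_in_edge[OF tree H1(1) H2(1) H12 Q(2)] H1(2) H2(2) by blast
  have H2_A: "H2 \<inter> A = {b}"
  proof
    show "H2 \<inter> A \<subseteq> {b}"
    proof
      fix w assume w: "w \<in> H2 \<inter> A"
      then have "w \<in> K - U"
        using infected_in_copy_off_e[OF card_P c(1) H2(1)] H2(2) by blast
      moreover have "w \<notin> {c1, c2}"
        using w c U_uninfected by blast
      ultimately show "w \<in> {b}"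
        using H1(3) H1_H2 w by blast
    qed
    show "{b} \<subseteq> H2 \<inter> A"
      using H2(2) b_A by blast
  qed
  have "bp_special_step r Hs A c1"
  proof (rule bp_special_stepI[OF _ H1(1) H2(1) H12 Q(2)])
    show "card (H1 \<inter> A) = r - 4"
      using H1_A card_P b_P by (simp add: card_Diff_singleton)
  qed (use no_usual_step H1 H2 H2_A c U_uninfected in auto)
  then show False
    using closed unfolding bp_step_def by blast
qed

lemma card_off_e_ne_2: "card (U - {a, b}) \<noteq> 2"
proof
  assume "card (U - {a, b}) = 2"
  then obtain c1 c2 where Q: "U - {a, b} = {c1, c2}" "c1 \<noteq> c2"
    by (meson card_2_iff)
  then have c: "c1 \<in> U - {a, b}" "c2 \<in> U - {a, b}"
    by blast+
  have "a \<in> U \<or> b \<in> U"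
  proof (rule ccontr)
    assume "\<not> (a \<in> U \<or> b \<in> U)"
    then have "U \<subseteq> {c1, c2}"
      using Q(1) by blast
    then have "card U \<le> 2"
      using card_mono[of "{c1, c2}" U] Q(2) by simp
    then show False
      using card_U c(1) by fastforce
  qed
  moreover have "U - {b, a} = {c1, c2}"
    using Q(1) by (simp add: insert_commute)
  ultimately have ends: "a \<in> U" "b \<in> U"
    using other_end_uninfected[OF Q] completed_copy.other_end_uninfected[OF swap _ Q(2)] by blast+
  have "card {a, b, c1, c2} \<le> 4"
    by (simp add: card_insert_if)
  then have "\<not> K \<subseteq> {a, b, c1, c2}"
    using card_mono[of "{a, b, c1, c2}" K] card_K r_ge_5 by auto
  then obtain x where x: "x \<in> K" "x \<notin> {a, b, c1, c2}"
    by blast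
  have "tree_clique Hs {x}"
    using x K_tree[OF c(1)] by (intro tree_clique_singleton) blast
  then have clique: "tree_clique Hs (insert c1 (insert c2 {x}))"
    using tree_clique_insert_off_e_pair c x(1) by blast
  have off_e: "insert c1 (insert c2 {x}) \<subseteq> K - {a, b}"
    using x c U_sub_K by auto
  have "card (insert c1 (insert c2 {x})) = 3"
    using x Q(2) by (auto simp: card_insert_if)
  with ends_uninfected_no_triangle[OF ends clique off_e] show False
    by simp
qed

theorem U_empty: "U = {}"
proof (rule ccontr)
  assume "U \<noteq> {}"
  then have "U - {a, b} \<noteq> {}"
    by (rule off_e_nonempty)
  moreover have "finite (U - {a, b})"
    using finite_subset[OF U_sub_K finite_K] by simp
  ultimately have "card (U - {a, b}) \<noteq> 0"
    by simp
  then show False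
    using card_off_e_le_2 card_off_e_ne_1 card_off_e_ne_2 by linarith
qed

end

definition completing_copy :: "nat \<Rightarrow> 'a set \<Rightarrow> 'a set set \<Rightarrow> 'a set \<Rightarrow> 'a set \<Rightarrow> bool" where
  "completing_copy r V E e K \<longleftrightarrow> K \<subseteq> V \<and> card K = r \<and> e \<subseteq> K \<and>
     (\<forall>p\<subseteq>K. card p = 2 \<and> p \<noteq> e \<longrightarrow> p \<in> E)"

lemma dyn_run_nth:
  assumes "dyn_run r V E0 es" "k < length es"
  shows "card (es ! k) = 2" "es ! k \<notin> E0 \<union> set (take k es)"
    and "\<exists>K. completing_copy r V (E0 \<union> set (take k es)) (es ! k) K"
  using assms unfolding dyn_run_def completing_copy_def by auto

lemma dyn_completed_nth:
  assumes "dyn_completed r V E0 es K"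
  obtains k where "k < length es" "completing_copy r V (E0 \<union> set (take k es)) (es ! k) K"
  using assms unfolding dyn_completed_def completing_copy_def by auto

locale closed_infection =
  fixes r :: nat and Hs :: "'a set list" and VG :: "'a set" and EG :: "'a set set" and A :: "'a set"
  assumes r_ge_5: "5 \<le> r"
    and tree: "Kr_tree r Hs"
    and graph: "simple_graph VG EG"
    and seeds_infected: "VG \<inter> tree_verts Hs \<subseteq> A"
    and closed: "\<And>v. \<not> bp_step r Hs A v"
begin

lemma completing_copy_within:
  assumes F: "\<And>g. g \<in> F \<Longrightarrow> g \<subseteq> VG \<union> A"
    and K: "completing_copy r (VG \<union> tree_verts Hs) (EG \<union> tree_edges Hs \<union> F) e K"
    and e: "card e = 2" "e \<notin> tree_edges Hs"
  shows "K \<subseteq> VG \<union> A"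
proof -
  obtain a b where ab: "e = {a, b}" "a \<noteq> b"
    using e(1) by (meson card_2_iff)
  define U where "U = K - (VG \<union> A)"
  have "completed_copy r Hs A K a b U"
  proof (rule completed_copy.intro)
    show "\<not> (\<exists>H\<in>set Hs. a \<in> H \<and> b \<in> H)"
      using e ab(1) unfolding tree_edges_def by blast
    show "tree_adj Hs u x" if "u \<in> U" "x \<in> K" "x \<noteq> u" "{u, x} \<noteq> {a, b}" for u x
    proof -
      have "{u, x} \<in> EG \<union> tree_edges Hs \<union> F"
        using K that ab(1) U_def unfolding completing_copy_def by auto
      moreover have "{u, x} \<notin> EG"
        using graph that(1) unfolding simple_graph_def U_def by blast
      moreover have "{u, x} \<notin> F"
        using F that(1) unfolding U_def by blast
      ultimately show ?thesis
        unfolding tree_adj_def using that(3) by blast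
    qed
  qed (use r_ge_5 tree closed K ab seeds_infected in \<open>auto simp: U_def completing_copy_def\<close>)
  then have "U = {}"
    by (rule completed_copy.U_empty)
  then show ?thesis
    unfolding U_def by blast
qed

lemma dyn_run_edges_within:
  assumes run: "dyn_run r (VG \<union> tree_verts Hs) (EG \<union> tree_edges Hs) es"
  shows "\<forall>g\<in>set es. g \<subseteq> VG \<union> A"
proof -
  have "\<forall>g\<in>set (take k es). g \<subseteq> VG \<union> A" if "k \<le> length es" for k
    using that
  proof (induction k)
    case 0
    then show ?case by simp
  next
    case (Suc k)
    then have k: "k < length es"
      by simp
    obtain K where K: "completing_copy r (VG \<union> tree_verts Hs) (EG \<union> tree_edges Hs \<union> set (take k es)) (es ! k) K"
      using dyn_run_nth(3)[OF run k] by blast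
    have "K \<subseteq> VG \<union> A"
      by (rule completing_copy_within[OF _ K]) (use Suc dyn_run_nth(1,2)[OF run k] in auto)
    moreover have "es ! k \<subseteq> K"
      using K unfolding completing_copy_def by blast
    ultimately show ?case
      using Suc k by (auto simp: take_Suc_conv_app_nth)
  qed
  then show ?thesis
    by (metis order.refl take_all)
qed

end

theorem corollary6p4:
  fixes r :: nat and Hs :: "'a set list" and VG :: "'a set" and EG :: "'a set set"
    and vs :: "'a list" and es :: "'a set list" and K :: "'a set"
  assumes "r \<ge> 5"
    and "Kr_tree r Hs"
    and "simple_graph VG EG"
    and "bp_run r Hs (VG \<inter> tree_verts Hs) vs"
    and "dyn_run r (VG \<union> tree_verts Hs) (EG \<union> tree_edges Hs) es"
    and "dyn_completed r (VG \<union> tree_verts Hs) (EG \<union> tree_edges Hs) es K"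
  shows "K \<subseteq> VG \<union> ((VG \<inter> tree_verts Hs) \<union> set vs)"
proof -
  let ?A = "(VG \<inter> tree_verts Hs) \<union> set vs"
  interpret closed_infection r Hs VG EG ?A
  proof
    show "\<not> bp_step r Hs ?A v" for v
      using assms(4) unfolding bp_run_def by blast
  qed (use assms(1-3) in auto)
  obtain k where k: "k < length es"
    and K: "completing_copy r (VG \<union> tree_verts Hs) (EG \<union> tree_edges Hs \<union> set (take k es)) (es ! k) K"
    using assms(6) by (rule dyn_completed_nth)
  have "g \<subseteq> VG \<union> ?A" if "g \<in> set (take k es)" for g
    using dyn_run_edges_within[OF assms(5)] in_set_takeD[OF that] by blast
  moreover have "card (es ! k) = 2" "es ! k \<notin> tree_edges Hs"
    using dyn_run_nth(1,2)[OF assms(5) k] by simp_all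
  ultimately show ?thesis
    using completing_copy_within[OF _ K] by blast
qed

end
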